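(* Let $A^1,\dots,A^d\in\mathbb{C}^{D\times D}$ define an injective matrix product state tensor, let $o$ be an operator on $(\mathbb{C}^d)^{\otimes k}$ with matrix elements $o^{i_1\cdots i_k}_{j_1\cdots j_k}=\bra{i_1\cdots i_k}o\ket{j_1\cdots j_k}$, and let $\epsilon\in\mathbb{C}$. Suppose two families of matrices $B^{i_1\cdots i_{k-1}},\tilde B^{i_1\cdots i_{k-1}}\in\mathbb{C}^{D\times D}$ (indexed by $(i_1,\dots,i_{k-1})\in\{1,\dots,d\}^{k-1}$) both satisfy, for all $i_1,\dots,i_k$, $$\sum_{j_1,\dots,j_k}\Big(o^{i_1\cdots i_k}_{j_1\cdots j_k}-\epsilon\,\delta_{i_1j_1}\cdots\delta_{i_kj_k}\Big)A^{j_1}\cdots A^{j_k}=A^{i_1}C^{i_2\cdots i_k}-C^{i_1\cdots i_{k-1}}A^{i_k}$$ with $C=B$ and with $C=\tilde B$ respectively. Then there exists $\lambda\in\mathbb{C}$ such that $\tilde B^{i_1\cdots i_{k-1}}=B^{i_1\cdots i_{k-1}}+\lambda\,A^{i_1}\cdots A^{i_{k-1}}$ for all $i_1,\dots,i_{k-1}$.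
   Context: For $M\ge1$ define $\Gamma_M:\mathbb{C}^{D\times D}\to(\mathbb{C}^d)^{\otimes M}$, $\Gamma_M(X)=\sum_{i_1,\dots,i_M}\operatorname{Tr}(XA^{i_1}\cdots A^{i_M})\ket{i_1\cdots i_M}$. The tensor $A$ is injective if $\Gamma_M$ is injective for some $M$. *)

theory Defs
  imports "HOL-Analysis.Analysis"
begin

definition words :: "nat \<Rightarrow> nat \<Rightarrow> nat list set" where
  "words d M = {w. length w = M \<and> set w \<subseteq> {..<d}}"

fun mprod :: "(nat \<Rightarrow> complex^'D^'D) \<Rightarrow> nat list \<Rightarrow> complex^'D^'D" where
  "mprod A [] = mat 1"
| "mprod A (i # w) = A i ** mprod A w"

text \<open>Gamma_M(X) = sum_w Tr(X A^{i_1}...A^{i_M}) |i_1...i_M>, as a coefficient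
  function on words (zero outside words of length M over {0..<d}).\<close>
definition Gamma :: "(nat \<Rightarrow> complex^'D^'D) \<Rightarrow> nat \<Rightarrow> nat \<Rightarrow> complex^'D^'D \<Rightarrow> (nat list \<Rightarrow> complex)" where
  "Gamma A d M X = (\<lambda>w. if w \<in> words d M then trace (X ** mprod A w) else 0)"

definition injective_mps :: "(nat \<Rightarrow> complex^'D^'D) \<Rightarrow> nat \<Rightarrow> bool" where
  "injective_mps A d \<longleftrightarrow> (\<exists>M\<ge>1. inj (Gamma A d M))"

end

theory Submission
  imports Defs
begin

(* Write X = Bt - B. Subtracting the two defining equations, X satisfies the homogeneous relation
   A^{i_1} X^{i_2...i_k} = X^{i_1...i_{k-1}} A^{i_k}, and pushing letters through X one at a time gives
   A_p A_q X_w = X_p A_q A_w for words p, w of length k - 1 and every word q. Injectivity of Gamma_M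
   means that the products A_q with |q| = M span all matrices, so this forces A_p \<otimes> X_w = X_p \<otimes> A_w
   as tensors; choosing p with A_p \<noteq> 0 shows that X_w is one fixed multiple of A_w. *)

lemma matrix_diff_ldistrib: "(A::'a::ring_1^'n^'m) ** (B - C) = A ** B - A ** (C::'a^'p^'n)"
  by (vector matrix_matrix_mult_def sum_subtractf right_diff_distrib)

lemma matrix_diff_rdistrib: "((B::'a::ring_1^'n^'m) - C) ** (A::'a^'p^'n) = B ** A - C ** A"
  by (vector matrix_matrix_mult_def sum_subtractf left_diff_distrib)

lemma mat_matrix_mult_nth: "(mat c ** Z) $ i $ j = c * Z $ i $ j"
  by (simp add: matrix_matrix_mult_def mat_def if_distrib if_distribR sum.delta cong: if_cong)

lemma mat_1_neq_0: "(mat 1 :: 'a::zero_neq_one^'n^'n) \<noteq> 0"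
  by (simp add: vec_eq_iff mat_def)

lemma trace_matrix_mult_pick_entry:
  fixes x y Z :: "'a::comm_semiring_1^'n^'n"
  shows "trace ((\<chi> k j. y $ k $ l * x $ i $ j) ** Z) = (x ** Z ** y) $ i $ l"
  unfolding trace_def matrix_matrix_mult_def
  by (simp add: sum_distrib_left sum_distrib_right ac_simps)

lemma mprod_append: "mprod A (u @ v) = mprod A u ** mprod A v"
  by (induction u) (auto simp: matrix_mul_assoc)

lemma Cons_in_words_Suc: "i # p \<in> words d (Suc L) \<longleftrightarrow> i < d \<and> p \<in> words d L"
  by (auto simp: words_def)

lemma inj_Gamma_trace_eq_0:
  assumes "inj (Gamma A d M)"
    and "\<And>u. u \<in> words d M \<Longrightarrow> trace (X ** mprod A u) = 0"
  shows "X = 0"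
proof -
  have "Gamma A d M X = Gamma A d M 0"
    unfolding Gamma_def using assms(2) by (auto simp: trace_def)
  with assms(1) show ?thesis by (auto dest: injD)
qed

lemma inj_Gamma_right_annihilator_eq_0:
  fixes Y :: "complex^'D^'D"
  assumes inj: "inj (Gamma A d M)" and M: "M \<ge> 1"
    and ann: "\<And>p. p \<in> words d L \<Longrightarrow> Y ** mprod A p = 0"
  shows "Y = 0"
  using ann
proof (induction L arbitrary: Y)
  case 0
  then show ?case by (auto simp: words_def)
next
  case (Suc L)
  have YA: "Y ** A i = 0" if "i < d" for i
  proof (rule Suc.IH)
    fix p assume "p \<in> words d L"
    with Suc.prems[of "i # p"] that show "Y ** A i ** mprod A p = 0"
      by (simp add: Cons_in_words_Suc matrix_mul_assoc)
  qed
  show "Y = 0"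
  proof (rule inj_Gamma_trace_eq_0[OF inj])
    fix u assume "u \<in> words d M"
    with M obtain i u' where "u = i # u'" "i < d"
      by (cases u) (auto simp: words_def)
    with YA show "trace (Y ** mprod A u) = 0"
      by (simp add: matrix_mul_assoc trace_def)
  qed
qed

lemma inj_Gamma_mprod_ne_0:
  assumes "inj (Gamma A d M)" and "M \<ge> 1"
  obtains p where "p \<in> words d L" and "mprod A p \<noteq> 0"
  using inj_Gamma_right_annihilator_eq_0[OF assms, of L "mat 1"] mat_1_neq_0 by auto

lemma inj_Gamma_sandwich_entries_eq:
  fixes a b c e :: "complex^'D^'D"
  assumes inj: "inj (Gamma A d M)"
    and sandwich: "\<And>q. q \<in> words d M \<Longrightarrow> a ** mprod A q ** b = c ** mprod A q ** e"
  shows "a $ i $ j * b $ k $ l = c $ i $ j * e $ k $ l"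
proof -
  define W :: "complex^'D^'D" where "W = (\<chi> k j. b $ k $ l * a $ i $ j - e $ k $ l * c $ i $ j)"
  have "W = (\<chi> k j. b $ k $ l * a $ i $ j) - (\<chi> k j. e $ k $ l * c $ i $ j)"
    by (simp add: W_def vec_eq_iff)
  then have "W = 0"
    using sandwich
    by (intro inj_Gamma_trace_eq_0[OF inj])
       (simp add: matrix_diff_rdistrib trace_sub trace_matrix_mult_pick_entry)
  then have "W $ k $ j = 0" by simp
  then show ?thesis by (simp add: W_def mult.commute)
qed

lemma mprod_mult_intertwiner:
  fixes X :: "nat list \<Rightarrow> complex^'D^'D"
  assumes intertw: "\<And>ii. ii \<in> words d (Suc n) \<Longrightarrow>
      A (hd ii) ** X (tl ii) = X (butlast ii) ** A (last ii)"
    and "set u \<subseteq> {..<d}" and "w \<in> words d n"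
  shows "mprod A u ** X w = X (take n (u @ w)) ** mprod A (drop n (u @ w))"
  using assms(2)
proof (induction u)
  case Nil
  with assms(3) show ?case by (simp add: words_def)
next
  case (Cons i u)
  define xs where "xs = i # u @ w"
  from Cons.prems assms(3) have len: "n < length xs" and "set xs \<subseteq> {..<d}"
    by (auto simp: xs_def words_def)
  then have "take (Suc n) xs \<in> words d (Suc n)"
    using set_take_subset[of "Suc n" xs] by (auto simp: words_def)
  moreover have "take (Suc n) xs = i # take n (u @ w)"
    by (simp add: xs_def)
  moreover have "take (Suc n) xs = take n xs @ [xs ! n]"
    using len by (simp add: take_Suc_conv_app_nth)
  ultimately have step: "A i ** X (take n (u @ w)) = X (take n xs) ** A (xs ! n)"
    using intertw by (metis butlast_snoc last_snoc list.sel(1,3))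
  have drop: "drop n xs = xs ! n # drop n (u @ w)"
    using Cons_nth_drop_Suc[OF len] by (simp add: xs_def)
  have "mprod A (i # u) ** X w = A i ** (mprod A u ** X w)"
    by (simp add: matrix_mul_assoc)
  also have "\<dots> = A i ** X (take n (u @ w)) ** mprod A (drop n (u @ w))"
    using Cons by (simp add: matrix_mul_assoc)
  also have "\<dots> = X (take n xs) ** mprod A (drop n xs)"
    unfolding step drop by (simp only: mprod.simps matrix_mul_assoc)
  finally show ?case by (simp add: xs_def)
qed

lemma proportional_if_cross_entries_eq:
  fixes P X :: "'b \<Rightarrow> 'a::field^'n^'m"
  assumes cross: "\<And>p w i j a b. p \<in> S \<Longrightarrow> w \<in> S \<Longrightarrow>
      P p $ i $ j * X w $ a $ b = X p $ i $ j * P w $ a $ b"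
    and "p0 \<in> S" and "P p0 \<noteq> 0"
  shows "\<exists>lam. \<forall>w\<in>S. X w = mat lam ** P w"
proof -
  from \<open>P p0 \<noteq> 0\<close> obtain i j where nz: "P p0 $ i $ j \<noteq> 0"
    by (metis vec_eq_iff zero_index)
  have "X w = mat (X p0 $ i $ j / P p0 $ i $ j) ** P w" if "w \<in> S" for w
    using cross[OF \<open>p0 \<in> S\<close> that, of i j] nz
    by (simp add: vec_eq_iff mat_matrix_mult_nth field_simps)
  then show ?thesis by blast
qed

lemma inj_Gamma_intertwiner_proportional:
  fixes X :: "nat list \<Rightarrow> complex^'D^'D"
  assumes inj: "inj (Gamma A d M)" and M: "M \<ge> 1"
    and intertw: "\<And>ii. ii \<in> words d (Suc n) \<Longrightarrow>
      A (hd ii) ** X (tl ii) = X (butlast ii) ** A (last ii)"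
  shows "\<exists>lam. \<forall>w\<in>words d n. X w = mat lam ** mprod A w"
proof -
  have "mprod A p ** mprod A q ** X w = X p ** mprod A q ** mprod A w"
    if p: "p \<in> words d n" and q: "q \<in> words d M" and w: "w \<in> words d n" for p q w
  proof -
    have "set (p @ q) \<subseteq> {..<d}" using p q by (auto simp: words_def)
    from mprod_mult_intertwiner[OF intertw this w] p
    have "mprod A (p @ q) ** X w = X p ** mprod A (q @ w)"
      by (simp add: words_def)
    then show ?thesis by (simp add: mprod_append matrix_mul_assoc)
  qed
  then have "mprod A p $ i $ j * X w $ a $ b = X p $ i $ j * mprod A w $ a $ b"
    if "p \<in> words d n" and "w \<in> words d n" for p w i j a b
    using that by (intro inj_Gamma_sandwich_entries_eq[OF inj]) blast
  moreover obtain p0 where "p0 \<in> words d n" and "mprod A p0 \<noteq> 0"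
    using inj_Gamma_mprod_ne_0[OF inj M] .
  ultimately show ?thesis
    by (rule proportional_if_cross_entries_eq)
qed

theorem theorem2:
  fixes A :: "nat \<Rightarrow> complex^'D^'D" and d k :: nat
    and Op :: "nat list \<Rightarrow> nat list \<Rightarrow> complex" and \<epsilon> :: complex
    and B Bt :: "nat list \<Rightarrow> complex^'D^'D"
  assumes inj: "injective_mps A d"
    and k: "k \<ge> 1"
    and hB: "\<And>ii. ii \<in> words d k \<Longrightarrow>
      (\<Sum>jj\<in>words d k. mat (Op ii jj - \<epsilon> * (if ii = jj then 1 else 0)) ** mprod A jj)
        = A (hd ii) ** B (tl ii) - B (butlast ii) ** A (last ii)"
    and hBt: "\<And>ii. ii \<in> words d k \<Longrightarrow>
      (\<Sum>jj\<in>words d k. mat (Op ii jj - \<epsilon> * (if ii = jj then 1 else 0)) ** mprod A jj)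
        = A (hd ii) ** Bt (tl ii) - Bt (butlast ii) ** A (last ii)"
  shows "\<exists>lam::complex. \<forall>ii\<in>words d (k - 1). Bt ii = B ii + mat lam ** mprod A ii"
proof -
  obtain M where "M \<ge> 1" and injG: "inj (Gamma A d M)"
    using inj unfolding injective_mps_def by blast
  have "A (hd ii) ** (Bt - B) (tl ii) = (Bt - B) (butlast ii) ** A (last ii)"
    if "ii \<in> words d (Suc (k - 1))" for ii
  proof -
    from that k have "A (hd ii) ** Bt (tl ii) - Bt (butlast ii) ** A (last ii)
        = A (hd ii) ** B (tl ii) - B (butlast ii) ** A (last ii)"
      using hB[of ii] hBt[of ii] by simp
    then show ?thesis
      by (simp add: matrix_diff_ldistrib matrix_diff_rdistrib algebra_simps)
  qed
  from inj_Gamma_intertwiner_proportional[OF injG \<open>M \<ge> 1\<close> this]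
  show ?thesis by (simp add: algebra_simps)
qed

end
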